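(* Let $(\mathcal Z,\mathcal W,\phi)$ be a state-flux triple, $\mathcal L$ an L-function on $\mathcal Z$ and $\mathcal V$ a quasipotential corresponding to $\mathcal L$. For any $\rho\in\mathrm{Dom}(F^{\mathrm{asym}})$, $u\in T_\rho\mathcal Z$ and $\lambda\in[0,1]$ we have $\mathcal R^\lambda_{F^{\mathrm{sym}}}(\rho)=-\hat{\mathcal H}(\rho,\lambda d\mathcal V(\rho))$ and $$\hat{\mathcal L}(\rho,u)\ge\mathcal R^\lambda_{F^{\mathrm{sym}}}(\rho)+\lambda\langle d\mathcal V(\rho),u\rangle.$$
   Context: A state-flux triple $(\mathcal Z,\mathcal W,\phi)$ consists of differentiable Banach manifolds $\mathcal Z$, $\mathcal W$ and a surjective differentiable map $\phi:\mathcal W\to\mathcal Z$ such that: $T_w\mathcal W$ depends on $w$ only through $\rho=\phi[w]$ (written $T_\rho\mathcal W$); the differential of $\phi$ is a bounded linear map depending only on $\rho$, written $d\phi_\rho:T_\rho\mathcal W\to T_\rho\mathcal Z$; $T_\rho\mathcal W$, $T_\rho\mathcal Z$ have Banach preduals $T^*_\rho\mathcal W$, $T^*_\rho\mathcal Z$ with pairings $\langle\cdot,\cdot\rangle$; $d\phi_\rho^{\mathsf T}:T^*_\rho\mathcal Z\to T^*_\rho\mathcal W$ is the adjoint. An L-function on $\mathcal Z$ is $\mathcal L:\{(\rho,j):\rho\in\mathcal Z,j\in T_\rho\mathcal W\}\to\mathbb R\cup\{\infty\}$ such that for each $\rho$, $\inf\mathcal L(\rho,\cdot)=0$, there is a unique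 $j^0(\rho)$ with $\mathcal L(\rho,j^0(\rho))=0$, and $\mathcal L(\rho,\cdot)$ is convex and lower semicontinuous; $\mathcal H(\rho,\zeta)=\sup_j\{\langle\zeta,j\rangle-\mathcal L(\rho,j)\}$. A quasipotential is $\mathcal V:\mathcal Z\to\mathbb R\cup\{\infty\}$ with $\inf\mathcal V=0$ and $\mathcal H(\rho,d\phi_\rho^{\mathsf T}d\mathcal V(\rho))=0$ wherever the Gateaux derivative $d\mathcal V(\rho)\in T^*_\rho\mathcal Z$ exists. $\mathrm{Dom}(F)$: set of $\rho$ where $j\mapsto\mathcal L(\rho,j)$ is Gateaux differentiable at $0$. $\mathrm{Dom}(F^{\mathrm{sym}})$: set where $\mathcal V$ is Gateaux differentiable, $F^{\mathrm{sym}}(\rho):=-\frac12d\phi_\rho^{\mathsf T}d\mathcal V(\rho)$; $\mathrm{Dom}(F^{\mathrm{asym}}):=\mathrm{Dom}(F)\cap\mathrm{Dom}(F^{\mathrm{sym}})$. Generalised Fisher information: $\mathcal R^\lambda_{F^{\mathrm{sym}}}(\rho):=-\mathcal H(\rho,-2\lambda F^{\mathrm{sym}}(\rho))$. Contracted L-function: $\hat{\mathcal L}(\rho,u):=\inf\{\mathcal L(\rho,j): j\in T_\rho\mathcal W,\ u=d\phi_\rho j\}$ for $u\in T_\rho\mathcal Z$, with convex dual $\hat{\mathcal H}(\rho,\xi):=\sup_{u\in T_\rho\mathcal Z}\{\langle\xi,u\rangle-\hat{\mathcal L}(\rho,u)\}$, $\xi\in T^*_\rho\mathcal Z$. *)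

theory Defs
  imports "HOL-Analysis.Analysis" "HOL-Library.Extended_Real"
begin

text \<open>X (a closed linear subspace of an ambient Banach type) is, via the pairing p,
  isometrically isomorphic to the dual of the Banach space Xs (closed subspace of another
  ambient Banach type): Xs is a Banach predual of X, with pairing p zeta x.\<close>
definition has_predual :: "'x::banach set \<Rightarrow> 'c::banach set \<Rightarrow> ('c \<Rightarrow> 'x \<Rightarrow> real) \<Rightarrow> bool" where
  "has_predual X Xs p \<longleftrightarrow>
     subspace X \<and> closed X \<and> subspace Xs \<and> closed Xs \<and>
     (\<forall>\<zeta>\<in>Xs. \<forall>x\<in>X. \<forall>y\<in>X. \<forall>a b. p \<zeta> (a *\<^sub>R x + b *\<^sub>R y) = a * p \<zeta> x + b * p \<zeta> y) \<and>
     (\<forall>x\<in>X. \<forall>\<zeta>\<in>Xs. \<forall>\<eta>\<in>Xs. \<forall>a b. p (a *\<^sub>R \<zeta> + b *\<^sub>R \<eta>) x = a * p \<zeta> x + b * p \<eta> x) \<and>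
     (\<forall>\<zeta>\<in>Xs. (\<forall>x\<in>X. p \<zeta> x = 0) \<longrightarrow> \<zeta> = 0) \<and>
     (\<forall>x\<in>X. \<forall>\<zeta>\<in>Xs. \<bar>p \<zeta> x\<bar> \<le> norm \<zeta> * norm x) \<and>
     (\<forall>x\<in>X. \<forall>c. (\<forall>\<zeta>\<in>Xs. \<bar>p \<zeta> x\<bar> \<le> c * norm \<zeta>) \<longrightarrow> norm x \<le> c) \<and>
     (\<forall>f. (\<forall>\<zeta>\<in>Xs. \<forall>\<eta>\<in>Xs. \<forall>a b. f (a *\<^sub>R \<zeta> + b *\<^sub>R \<eta>) = a * f \<zeta> + b * f \<eta>) \<and>
          (\<exists>C. \<forall>\<zeta>\<in>Xs. \<bar>f \<zeta>\<bar> \<le> C * norm \<zeta>)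
          \<longrightarrow> (\<exists>x\<in>X. \<forall>\<zeta>\<in>Xs. f \<zeta> = p \<zeta> x))"

text \<open>The manifolds are point sets Z, W; the tangent spaces
  T_rho Z, T_rho W (depending on w only through rho = phi w) are closed subspaces TZ rho,
  TW rho of ambient Banach types, with preduals TZs rho, TWs rho and pairings pZ, pW.
  The differentiable structure of Z is encoded by a local parametrisation (retraction)
  retrZ rho : T_rho Z -> Z, used to define Gateaux derivatives of functions on Z.\<close>
record ('z, 'w, 'tz, 'tw, 'cz, 'cw) sft =
  SZ :: "'z set"
  SW :: "'w set"
  phi :: "'w \<Rightarrow> 'z"
  TZ :: "'z \<Rightarrow> 'tz set"
  TW :: "'z \<Rightarrow> 'tw set"
  TZs :: "'z \<Rightarrow> 'cz set"
  TWs :: "'z \<Rightarrow> 'cw set"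
  pZ :: "'z \<Rightarrow> 'cz \<Rightarrow> 'tz \<Rightarrow> real"
  pW :: "'z \<Rightarrow> 'cw \<Rightarrow> 'tw \<Rightarrow> real"
  dphi :: "'z \<Rightarrow> 'tw \<Rightarrow> 'tz"
  dphiT :: "'z \<Rightarrow> 'cz \<Rightarrow> 'cw"
  retrZ :: "'z \<Rightarrow> 'tz \<Rightarrow> 'z"

definition state_flux_triple ::
  "('z, 'w, 'tz::banach, 'tw::banach, 'cz::banach, 'cw::banach) sft \<Rightarrow> bool" where
  "state_flux_triple S \<longleftrightarrow>
     phi S ` SW S = SZ S \<and>
     (\<forall>\<rho>\<in>SZ S.
        has_predual (TW S \<rho>) (TWs S \<rho>) (pW S \<rho>) \<and>
        has_predual (TZ S \<rho>) (TZs S \<rho>) (pZ S \<rho>) \<and>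
        \<comment> \<open>d phi_rho : T_rho W -> T_rho Z bounded linear\<close>
        dphi S \<rho> ` TW S \<rho> \<subseteq> TZ S \<rho> \<and>
        (\<forall>x\<in>TW S \<rho>. \<forall>y\<in>TW S \<rho>. \<forall>a b.
            dphi S \<rho> (a *\<^sub>R x + b *\<^sub>R y) = a *\<^sub>R dphi S \<rho> x + b *\<^sub>R dphi S \<rho> y) \<and>
        (\<exists>C. \<forall>x\<in>TW S \<rho>. norm (dphi S \<rho> x) \<le> C * norm x) \<and>
        \<comment> \<open>its adjoint T*_rho Z -> T*_rho W\<close>
        dphiT S \<rho> ` TZs S \<rho> \<subseteq> TWs S \<rho> \<and>
        (\<forall>\<xi>\<in>TZs S \<rho>. \<forall>j\<in>TW S \<rho>. pW S \<rho> (dphiT S \<rho> \<xi>) j = pZ S \<rho> \<xi> (dphi S \<rho> j)) \<and>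
        \<comment> \<open>local parametrisation of Z around rho\<close>
        retrZ S \<rho> ` TZ S \<rho> \<subseteq> SZ S \<and> retrZ S \<rho> 0 = \<rho> \<and>
        (\<exists>e>0. inj_on (retrZ S \<rho>) (TZ S \<rho> \<inter> ball 0 e)))"

definition ereal_convex_on :: "'a::real_vector set \<Rightarrow> ('a \<Rightarrow> ereal) \<Rightarrow> bool" where
  "ereal_convex_on A f \<longleftrightarrow>
     (\<forall>x\<in>A. \<forall>y\<in>A. \<forall>t::real. 0 \<le> t \<and> t \<le> 1 \<longrightarrow>
        f (t *\<^sub>R x + (1 - t) *\<^sub>R y) \<le> ereal t * f x + ereal (1 - t) * f y)"

definition ereal_lsc_on :: "'a::topological_space set \<Rightarrow> ('a \<Rightarrow> ereal) \<Rightarrow> bool" where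
  "ereal_lsc_on A f \<longleftrightarrow> (\<forall>c. closedin (top_of_set A) {x\<in>A. f x \<le> c})"

definition L_function ::
  "('z, 'w, 'tz::banach, 'tw::banach, 'cz::banach, 'cw::banach) sft \<Rightarrow> ('z \<Rightarrow> 'tw \<Rightarrow> ereal) \<Rightarrow> bool" where
  "L_function S L \<longleftrightarrow>
     (\<forall>\<rho>\<in>SZ S.
        (\<forall>j\<in>TW S \<rho>. L \<rho> j \<noteq> -\<infinity>) \<and>
        (INF j\<in>TW S \<rho>. L \<rho> j) = 0 \<and>
        (\<exists>!j0. j0 \<in> TW S \<rho> \<and> L \<rho> j0 = 0) \<and>
        ereal_convex_on (TW S \<rho>) (L \<rho>) \<and>
        ereal_lsc_on (TW S \<rho>) (L \<rho>))"

definition Ham ::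
  "('z, 'w, 'tz, 'tw, 'cz, 'cw) sft \<Rightarrow> ('z \<Rightarrow> 'tw \<Rightarrow> ereal) \<Rightarrow> 'z \<Rightarrow> 'cw \<Rightarrow> ereal" where
  "Ham S L \<rho> \<zeta> = (SUP j\<in>TW S \<rho>. ereal (pW S \<rho> \<zeta> j) - L \<rho> j)"

definition gateaux_Z ::
  "('z, 'w, 'tz::real_vector, 'tw, 'cz, 'cw) sft \<Rightarrow> ('z \<Rightarrow> ereal) \<Rightarrow> 'z \<Rightarrow> 'cz \<Rightarrow> bool" where
  "gateaux_Z S V \<rho> \<xi> \<longleftrightarrow> \<xi> \<in> TZs S \<rho> \<and>
     (\<forall>u\<in>TZ S \<rho>.
        (\<forall>\<^sub>F t in nhds 0. \<bar>V (retrZ S \<rho> (t *\<^sub>R u))\<bar> \<noteq> \<infinity>) \<and>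
        ((\<lambda>t. real_of_ereal (V (retrZ S \<rho> (t *\<^sub>R u)))) has_real_derivative pZ S \<rho> \<xi> u) (at 0))"

definition gateaux_differentiable_Z where
  "gateaux_differentiable_Z S V \<rho> \<longleftrightarrow> (\<exists>\<xi>. gateaux_Z S V \<rho> \<xi>)"

definition dV :: "('z, 'w, 'tz::real_vector, 'tw, 'cz, 'cw) sft \<Rightarrow> ('z \<Rightarrow> ereal) \<Rightarrow> 'z \<Rightarrow> 'cz" where
  "dV S V \<rho> = (THE \<xi>. gateaux_Z S V \<rho> \<xi>)"

definition gateaux_differentiable_L_at0 ::
  "('z, 'w, 'tz, 'tw::real_vector, 'cz, 'cw) sft \<Rightarrow> ('z \<Rightarrow> 'tw \<Rightarrow> ereal) \<Rightarrow> 'z \<Rightarrow> bool" where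
  "gateaux_differentiable_L_at0 S L \<rho> \<longleftrightarrow>
     (\<exists>\<zeta>\<in>TWs S \<rho>. \<forall>h\<in>TW S \<rho>.
        (\<forall>\<^sub>F t in nhds 0. \<bar>L \<rho> (t *\<^sub>R h)\<bar> \<noteq> \<infinity>) \<and>
        ((\<lambda>t. real_of_ereal (L \<rho> (t *\<^sub>R h))) has_real_derivative pW S \<rho> \<zeta> h) (at 0))"

definition quasipotential ::
  "('z, 'w, 'tz::real_vector, 'tw, 'cz, 'cw) sft \<Rightarrow> ('z \<Rightarrow> 'tw \<Rightarrow> ereal) \<Rightarrow> ('z \<Rightarrow> ereal) \<Rightarrow> bool" where
  "quasipotential S L V \<longleftrightarrow>
     (\<forall>\<rho>\<in>SZ S. V \<rho> \<noteq> -\<infinity>) \<and>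
     (INF \<rho>\<in>SZ S. V \<rho>) = 0 \<and>
     (\<forall>\<rho>\<in>SZ S. gateaux_differentiable_Z S V \<rho> \<longrightarrow> Ham S L \<rho> (dphiT S \<rho> (dV S V \<rho>)) = 0)"

definition Dom_F where
  "Dom_F S L = {\<rho>\<in>SZ S. gateaux_differentiable_L_at0 S L \<rho>}"

definition Dom_Fsym where
  "Dom_Fsym S V = {\<rho>\<in>SZ S. gateaux_differentiable_Z S V \<rho>}"

definition Dom_Fasym where
  "Dom_Fasym S L V = Dom_F S L \<inter> Dom_Fsym S V"

definition Fsym :: "('z, 'w, 'tz::real_vector, 'tw, 'cz, 'cw::real_vector) sft \<Rightarrow> ('z \<Rightarrow> ereal) \<Rightarrow> 'z \<Rightarrow> 'cw" where
  "Fsym S V \<rho> = - (1/2) *\<^sub>R dphiT S \<rho> (dV S V \<rho>)"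

definition Fisher_R where
  "Fisher_R S L V lam \<rho> = - Ham S L \<rho> (- (2 * lam) *\<^sub>R Fsym S V \<rho>)"

definition Lhat :: "('z, 'w, 'tz, 'tw, 'cz, 'cw) sft \<Rightarrow> ('z \<Rightarrow> 'tw \<Rightarrow> ereal) \<Rightarrow> 'z \<Rightarrow> 'tz \<Rightarrow> ereal" where
  "Lhat S L \<rho> u = (INF j\<in>{j\<in>TW S \<rho>. u = dphi S \<rho> j}. L \<rho> j)"

definition Hhat :: "('z, 'w, 'tz, 'tw, 'cz, 'cw) sft \<Rightarrow> ('z \<Rightarrow> 'tw \<Rightarrow> ereal) \<Rightarrow> 'z \<Rightarrow> 'cz \<Rightarrow> ereal" where
  "Hhat S L \<rho> \<xi> = (SUP u\<in>TZ S \<rho>. ereal (pZ S \<rho> \<xi> u) - Lhat S L \<rho> u)"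

end

theory Submission
  imports Defs
begin

text \<open>The supremum defining \<open>Hhat(\<rho>, \<xi>)\<close> runs over \<open>u\<close> and, through the infimum in
  \<open>Lhat(\<rho>, u)\<close>, over the fibre \<open>d\<phi>\<^sub>\<rho> j = u\<close>. The two suprema merge into a single one over
  all fluxes \<open>j\<close>, and since \<open>\<langle>\<xi>, d\<phi>\<^sub>\<rho> j\<rangle> = \<langle>d\<phi>\<^sub>\<rho>\<^sup>T \<xi>, j\<rangle>\<close> this gives
  \<open>Hhat(\<rho>, \<xi>) = H(\<rho>, d\<phi>\<^sub>\<rho>\<^sup>T \<xi>)\<close>. For \<open>\<xi> = \<lambda> dV(\<rho>)\<close> the right-hand side is
  \<open>H(\<rho>, -2\<lambda> F_sym(\<rho>))\<close>, and the inequality is Fenchel-Young for the pair \<open>Lhat\<close>, \<open>Hhat\<close>.\<close>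

lemma has_predualD:
  assumes "has_predual X Xs p"
  shows "subspace Xs"
    and "\<And>x \<zeta> \<eta> a b. x \<in> X \<Longrightarrow> \<zeta> \<in> Xs \<Longrightarrow> \<eta> \<in> Xs \<Longrightarrow>
           p (a *\<^sub>R \<zeta> + b *\<^sub>R \<eta>) x = a * p \<zeta> x + b * p \<eta> x"
    and "\<And>\<zeta>. \<zeta> \<in> Xs \<Longrightarrow> (\<And>x. x \<in> X \<Longrightarrow> p \<zeta> x = 0) \<Longrightarrow> \<zeta> = 0"
proof -
  have "subspace Xs"
    using assms unfolding has_predual_def by (elim conjE) assumption
  moreover have "\<forall>x\<in>X. \<forall>\<zeta>\<in>Xs. \<forall>\<eta>\<in>Xs. \<forall>a b. p (a *\<^sub>R \<zeta> + b *\<^sub>R \<eta>) x = a * p \<zeta> x + b * p \<eta> x"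
    using assms unfolding has_predual_def by (elim conjE) assumption
  moreover have "\<forall>\<zeta>\<in>Xs. (\<forall>x\<in>X. p \<zeta> x = 0) \<longrightarrow> \<zeta> = 0"
    using assms unfolding has_predual_def by (elim conjE) assumption
  ultimately show "subspace Xs"
    and "\<And>x \<zeta> \<eta> a b. x \<in> X \<Longrightarrow> \<zeta> \<in> Xs \<Longrightarrow> \<eta> \<in> Xs \<Longrightarrow>
           p (a *\<^sub>R \<zeta> + b *\<^sub>R \<eta>) x = a * p \<zeta> x + b * p \<eta> x"
    and "\<And>\<zeta>. \<zeta> \<in> Xs \<Longrightarrow> (\<And>x. x \<in> X \<Longrightarrow> p \<zeta> x = 0) \<Longrightarrow> \<zeta> = 0"
    by blast+
qed

lemma has_predual_pairing_scaleR:
  assumes "has_predual X Xs p" "x \<in> X" "\<zeta> \<in> Xs"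
  shows "p (a *\<^sub>R \<zeta>) x = a * p \<zeta> x"
  using has_predualD(2)[OF assms assms(3), of a 0] by simp

lemma has_predual_scaleR_mem:
  assumes "has_predual X Xs p" "\<zeta> \<in> Xs"
  shows "a *\<^sub>R \<zeta> \<in> Xs"
  using has_predualD(1)[OF assms(1)] assms(2) by (rule subspace_scale)

lemma has_predual_eqI:
  assumes hp: "has_predual X Xs p" and "\<zeta> \<in> Xs" "\<eta> \<in> Xs"
    and pairing_eq: "\<And>x. x \<in> X \<Longrightarrow> p \<zeta> x = p \<eta> x"
  shows "\<zeta> = \<eta>"
proof -
  have "1 *\<^sub>R \<zeta> + (-1) *\<^sub>R \<eta> = 0"
  proof (rule has_predualD(3)[OF hp])
    show "1 *\<^sub>R \<zeta> + (-1) *\<^sub>R \<eta> \<in> Xs"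
      using has_predualD(1)[OF hp] \<open>\<zeta> \<in> Xs\<close> \<open>\<eta> \<in> Xs\<close> by (simp add: subspace_diff)
    show "p (1 *\<^sub>R \<zeta> + (-1) *\<^sub>R \<eta>) x = 0" if "x \<in> X" for x
      using has_predualD(2)[OF hp that \<open>\<zeta> \<in> Xs\<close> \<open>\<eta> \<in> Xs\<close>, of 1 "-1"] pairing_eq[OF that] by simp
  qed
  then show ?thesis by simp
qed

lemma state_flux_tripleD:
  assumes "state_flux_triple S" "\<rho> \<in> SZ S"
  shows "has_predual (TW S \<rho>) (TWs S \<rho>) (pW S \<rho>)"
    and "has_predual (TZ S \<rho>) (TZs S \<rho>) (pZ S \<rho>)"
    and "dphi S \<rho> ` TW S \<rho> \<subseteq> TZ S \<rho>"
    and "dphiT S \<rho> ` TZs S \<rho> \<subseteq> TWs S \<rho>"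
    and "\<And>\<xi> j. \<xi> \<in> TZs S \<rho> \<Longrightarrow> j \<in> TW S \<rho> \<Longrightarrow> pW S \<rho> (dphiT S \<rho> \<xi>) j = pZ S \<rho> \<xi> (dphi S \<rho> j)"
proof -
  have "has_predual (TW S \<rho>) (TWs S \<rho>) (pW S \<rho>) \<and>
      has_predual (TZ S \<rho>) (TZs S \<rho>) (pZ S \<rho>) \<and>
      dphi S \<rho> ` TW S \<rho> \<subseteq> TZ S \<rho> \<and>
      dphiT S \<rho> ` TZs S \<rho> \<subseteq> TWs S \<rho> \<and>
      (\<forall>\<xi>\<in>TZs S \<rho>. \<forall>j\<in>TW S \<rho>. pW S \<rho> (dphiT S \<rho> \<xi>) j = pZ S \<rho> \<xi> (dphi S \<rho> j))"
    using bspec[OF conjunct2[OF assms(1)[unfolded state_flux_triple_def]] assms(2)]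
    by (elim conjE) (intro conjI; assumption)
  then show "has_predual (TW S \<rho>) (TWs S \<rho>) (pW S \<rho>)"
    and "has_predual (TZ S \<rho>) (TZs S \<rho>) (pZ S \<rho>)"
    and "dphi S \<rho> ` TW S \<rho> \<subseteq> TZ S \<rho>"
    and "dphiT S \<rho> ` TZs S \<rho> \<subseteq> TWs S \<rho>"
    and "\<And>\<xi> j. \<xi> \<in> TZs S \<rho> \<Longrightarrow> j \<in> TW S \<rho> \<Longrightarrow> pW S \<rho> (dphiT S \<rho> \<xi>) j = pZ S \<rho> \<xi> (dphi S \<rho> j)"
    by blast+
qed

lemma dphiT_scaleR:
  assumes "state_flux_triple S" "\<rho> \<in> SZ S" "\<xi> \<in> TZs S \<rho>"
  shows "dphiT S \<rho> (a *\<^sub>R \<xi>) = a *\<^sub>R dphiT S \<rho> \<xi>"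
proof -
  note sft = state_flux_tripleD[OF assms(1,2)]
  have a\<xi>: "a *\<^sub>R \<xi> \<in> TZs S \<rho>" by (rule has_predual_scaleR_mem[OF sft(2) assms(3)])
  have \<xi>': "dphiT S \<rho> \<xi> \<in> TWs S \<rho>" using sft(4) assms(3) by blast
  show ?thesis
  proof (rule has_predual_eqI[OF sft(1)])
    show "dphiT S \<rho> (a *\<^sub>R \<xi>) \<in> TWs S \<rho>" using sft(4) a\<xi> by blast
    show "a *\<^sub>R dphiT S \<rho> \<xi> \<in> TWs S \<rho>" by (rule has_predual_scaleR_mem[OF sft(1) \<xi>'])
    fix j assume j: "j \<in> TW S \<rho>"
    then have "dphi S \<rho> j \<in> TZ S \<rho>" using sft(3) by blast
    then have "pW S \<rho> (dphiT S \<rho> (a *\<^sub>R \<xi>)) j = a * pZ S \<rho> \<xi> (dphi S \<rho> j)"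
      using sft(5)[OF a\<xi> j] has_predual_pairing_scaleR[OF sft(2) _ assms(3)] by simp
    also have "\<dots> = pW S \<rho> (a *\<^sub>R dphiT S \<rho> \<xi>) j"
      using sft(5)[OF assms(3) j] has_predual_pairing_scaleR[OF sft(1) j \<xi>'] by simp
    finally show "pW S \<rho> (dphiT S \<rho> (a *\<^sub>R \<xi>)) j = pW S \<rho> (a *\<^sub>R dphiT S \<rho> \<xi>) j" .
  qed
qed

lemma gateaux_Z_unique:
  assumes "has_predual (TZ S \<rho>) (TZs S \<rho>) (pZ S \<rho>)"
    and "gateaux_Z S V \<rho> \<xi>" "gateaux_Z S V \<rho> \<eta>"
  shows "\<xi> = \<eta>"
proof (rule has_predual_eqI[OF assms(1)])
  show "\<xi> \<in> TZs S \<rho>" "\<eta> \<in> TZs S \<rho>" using assms(2,3) unfolding gateaux_Z_def by blast+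
  fix u assume "u \<in> TZ S \<rho>"
  then show "pZ S \<rho> \<xi> u = pZ S \<rho> \<eta> u"
    using assms(2,3) unfolding gateaux_Z_def by (blast intro: DERIV_unique)
qed

text \<open>\<open>dV\<close> is defined by \<open>THE\<close>, so it is a Gateaux derivative only because Gateaux derivatives
  are unique.\<close>

lemma dV_in_TZs:
  assumes "state_flux_triple S" "\<rho> \<in> Dom_Fsym S V"
  shows "dV S V \<rho> \<in> TZs S \<rho>"
proof -
  have \<rho>: "\<rho> \<in> SZ S" and "\<exists>\<xi>. gateaux_Z S V \<rho> \<xi>"
    using assms(2) unfolding Dom_Fsym_def gateaux_differentiable_Z_def by auto
  then have "gateaux_Z S V \<rho> (dV S V \<rho>)"
    unfolding dV_def
    by (metis theI gateaux_Z_unique[OF state_flux_tripleD(2)[OF assms(1) \<rho>]])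
  then show ?thesis unfolding gateaux_Z_def by blast
qed

lemma SUP_minus_INF_fibres:
  fixes \<psi> :: "'b \<Rightarrow> real" and L :: "'a \<Rightarrow> ereal"
  assumes "f ` A \<subseteq> B"
  shows "(SUP v\<in>B. ereal (\<psi> v) - (INF j\<in>{j\<in>A. v = f j}. L j)) = (SUP j\<in>A. ereal (\<psi> (f j)) - L j)"
proof -
  have fibre: "ereal (\<psi> v) - (INF j\<in>{j\<in>A. v = f j}. L j) = (SUP j\<in>{j\<in>A. v = f j}. ereal (\<psi> (f j)) - L j)"
    for v
  proof (cases "{j\<in>A. v = f j} = {}")
    case True
    show ?thesis unfolding True by (simp add: top_ereal_def bot_ereal_def)
  next
    case False
    then have "ereal (\<psi> v) - (INF j\<in>{j\<in>A. v = f j}. L j) = (SUP j\<in>{j\<in>A. v = f j}. ereal (\<psi> v) - L j)"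
      by (intro SUP_ereal_minus_right[symmetric]) simp_all
    also have "\<dots> = (SUP j\<in>{j\<in>A. v = f j}. ereal (\<psi> (f j)) - L j)"
      by (rule SUP_cong) auto
    finally show ?thesis .
  qed
  have "(\<Union>v\<in>B. {j\<in>A. v = f j}) = A" using assms by auto
  then show ?thesis unfolding fibre SUP_UNION[symmetric] by simp
qed

lemma Hhat_eq_Ham_dphiT:
  assumes "state_flux_triple S" "\<rho> \<in> SZ S" "\<xi> \<in> TZs S \<rho>"
  shows "Hhat S L \<rho> \<xi> = Ham S L \<rho> (dphiT S \<rho> \<xi>)"
proof -
  note sft = state_flux_tripleD[OF assms(1,2)]
  have "Hhat S L \<rho> \<xi> = (SUP j\<in>TW S \<rho>. ereal (pZ S \<rho> \<xi> (dphi S \<rho> j)) - L \<rho> j)"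
    unfolding Hhat_def Lhat_def using sft(3) by (rule SUP_minus_INF_fibres)
  also have "\<dots> = Ham S L \<rho> (dphiT S \<rho> \<xi>)"
    unfolding Ham_def using sft(5) assms(3) by (intro SUP_cong) simp_all
  finally show ?thesis .
qed

lemma Lhat_ge_pairing_minus_Hhat:
  assumes "u \<in> TZ S \<rho>"
  shows "- Hhat S L \<rho> \<xi> + ereal (pZ S \<rho> \<xi> u) \<le> Lhat S L \<rho> u"
proof -
  have "ereal (pZ S \<rho> \<xi> u) - Lhat S L \<rho> u \<le> Hhat S L \<rho> \<xi>"
    unfolding Hhat_def using assms by (rule SUP_upper)
  then show ?thesis
    by (cases "Lhat S L \<rho> u"; cases "Hhat S L \<rho> \<xi>") auto
qed

theorem corollary2p32:
  fixes S :: "('z, 'w, 'tz::banach, 'tw::banach, 'cz::banach, 'cw::banach) sft"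
    and L :: "'z \<Rightarrow> 'tw \<Rightarrow> ereal" and V :: "'z \<Rightarrow> ereal"
    and \<rho> :: 'z and u :: 'tz and lam :: real
  assumes "state_flux_triple S"
    and "L_function S L"
    and "quasipotential S L V"
    and "\<rho> \<in> Dom_Fasym S L V"
    and "u \<in> TZ S \<rho>"
    and "0 \<le> lam" and "lam \<le> 1"
  shows "Fisher_R S L V lam \<rho> = - Hhat S L \<rho> (lam *\<^sub>R dV S V \<rho>)
       \<and> Lhat S L \<rho> u \<ge> Fisher_R S L V lam \<rho> + ereal (lam * pZ S \<rho> (dV S V \<rho>) u)"
proof
  have \<rho>: "\<rho> \<in> SZ S" and dV_mem: "dV S V \<rho> \<in> TZs S \<rho>"
    using assms(4) dV_in_TZs[OF assms(1)] unfolding Dom_Fasym_def Dom_Fsym_def by auto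
  have "Fisher_R S L V lam \<rho> = - Ham S L \<rho> (lam *\<^sub>R dphiT S \<rho> (dV S V \<rho>))"
    unfolding Fisher_R_def Fsym_def by simp
  also have "\<dots> = - Hhat S L \<rho> (lam *\<^sub>R dV S V \<rho>)"
    using Hhat_eq_Ham_dphiT[OF assms(1) \<rho>] dphiT_scaleR[OF assms(1) \<rho> dV_mem]
      has_predual_scaleR_mem[OF state_flux_tripleD(2)[OF assms(1) \<rho>] dV_mem] by simp
  finally show Fisher: "Fisher_R S L V lam \<rho> = - Hhat S L \<rho> (lam *\<^sub>R dV S V \<rho>)" .
  have "pZ S \<rho> (lam *\<^sub>R dV S V \<rho>) u = lam * pZ S \<rho> (dV S V \<rho>) u"
    using has_predual_pairing_scaleR[OF state_flux_tripleD(2)[OF assms(1) \<rho>] assms(5) dV_mem] .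
  then show "Lhat S L \<rho> u \<ge> Fisher_R S L V lam \<rho> + ereal (lam * pZ S \<rho> (dV S V \<rho>) u)"
    using Fisher Lhat_ge_pairing_minus_Hhat[OF assms(5), of L "lam *\<^sub>R dV S V \<rho>"] by simp
qed

end
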